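(* Assume that $\pi$ is a permutation of length $j$ and $\delta=\delta_1\cdots\delta_{k+1}$ is a permutation of length $k+1$, disjoint from each other, where $\mathrm{des}(\pi) = j'$ and $\mathrm{des}(\delta) = k'$. Moreover, $\delta_1<\delta_2$ and all of the elements of $\delta$ are larger than the elements of $\pi$. Then \begin{align*} \sum_{\alpha \in \mathrm{Sh}_l(\pi,\delta)} t^{\mathrm{des}(\alpha)}&=\sum_{i\geq 1} \binom{k+1-k'+j'}{i+j'-k'} \binom{j-j'+k'-1}{i-1} t^{i+j'},\\ \sum_{\alpha \in \mathrm{Sh}_{ls}(\pi,\delta)} t^{\mathrm{des}(\alpha)}&=\sum_{i\geq 1} \binom{k-k'+j'}{i+j'-k'} \binom{j-j'+k'-1}{i-1} t^{i+j'},\\ \sum_{\alpha \in \mathrm{Sh}_{ll}(\pi,\delta)} t^{\mathrm{des}(\alpha)}&=\sum_{i\geq 1} \binom{k-k'+j'}{i+j'-k'} \binom{j-j'+k'-1}{i-1} t^{i+j'}. \end{align*}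
   Context: A permutation of length $n$ here means a sequence of $n$ distinct integers (not necessarily $1,\dots,n$); two permutations are disjoint if they have no letters in common. For $\alpha=\alpha_1\cdots\alpha_n$, $\mathrm{des}(\alpha)$ is the number of indices $i$ with $\alpha_i>\alpha_{i+1}$. For disjoint permutations $\pi=\pi_1\cdots\pi_m$ and $\delta=\delta_1\cdots\delta_n$, a shuffle of $\pi$ and $\delta$ is a permutation $\alpha=\alpha_1\cdots\alpha_{m+n}$ containing both $\pi$ and $\delta$ as subsequences. $\mathrm{Sh}_l(\pi,\delta)$ is the set of shuffles with $\alpha_1=\delta_1$; $\mathrm{Sh}_{ls}(\pi,\delta)$ is the set of shuffles with $\alpha_1=\delta_1$ and $\alpha_{n+m}=\delta_n$ (the last letter of $\delta$); $\mathrm{Sh}_{ll}(\pi,\delta)$ is the set of shuffles with $\alpha_1=\delta_1$ and $\alpha_2=\delta_2$. *)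

theory Defs
  imports Main "HOL-Library.Sublist"
begin

text \<open>A permutation is a list of distinct integers.\<close>
definition des :: "int list \<Rightarrow> nat" where
  "des \<alpha> = card {i. Suc i < length \<alpha> \<and> \<alpha> ! i > \<alpha> ! Suc i}"

definition Sh :: "int list \<Rightarrow> int list \<Rightarrow> int list set" where
  "Sh \<pi> \<delta> = {\<alpha>. distinct \<alpha> \<and> length \<alpha> = length \<pi> + length \<delta> \<and> subseq \<pi> \<alpha> \<and> subseq \<delta> \<alpha>}"

definition Sh_l :: "int list \<Rightarrow> int list \<Rightarrow> int list set" where
  "Sh_l \<pi> \<delta> = {\<alpha> \<in> Sh \<pi> \<delta>. \<alpha> ! 0 = \<delta> ! 0}"

definition Sh_ls :: "int list \<Rightarrow> int list \<Rightarrow> int list set" where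
  "Sh_ls \<pi> \<delta> = {\<alpha> \<in> Sh \<pi> \<delta>. \<alpha> ! 0 = \<delta> ! 0 \<and> last \<alpha> = last \<delta>}"

definition Sh_ll :: "int list \<Rightarrow> int list \<Rightarrow> int list set" where
  "Sh_ll \<pi> \<delta> = {\<alpha> \<in> Sh \<pi> \<delta>. \<alpha> ! 0 = \<delta> ! 0 \<and> \<alpha> ! 1 = \<delta> ! 1}"

end

theory Submission
  imports Defs
begin

text \<open>
  Classify shuffles by their first letter. Deleting it leaves a shuffle of \<pi> with the tail of \<delta>,
  or of the tail of \<pi> with \<delta>, and the deleted letter adds a descent iff it exceeds the new first
  letter. As every letter of \<pi> lies below every letter of \<delta>, this only depends on whether the
  first two letters of \<pi> (resp. \<delta>) form a descent. Hence the descent polynomials of the shuffles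
  led by the first letter of \<delta> and of those led by the first letter of \<pi> obey a pair of linear
  recurrences in the numbers of descents and non-descents of \<pi> and \<delta>; by Pascal's rule certain
  products of two binomial coefficients obey the same recurrences, and induction identifies the two.
  Prescribing the last letter lowers one binomial top by one. Since the first two letters of \<delta>
  form an ascent, a shuffle in Sh_ll is the first letter of \<delta> followed by a shuffle of \<pi> with
  the tail of \<delta> that is led by its first letter.
\<close>

lemma filter_mem_eq_if_subseq:
  assumes "subseq xs zs" "distinct xs" "distinct zs"
  shows "filter (\<lambda>x. x \<in> set xs) zs = xs"
proof -
  have "subseq xs (filter (\<lambda>x. x \<in> set xs) zs)"
    using subseq_filter[OF assms(1), of "\<lambda>x. x \<in> set xs"] by simp
  moreover have "set xs \<subseteq> set zs"
    using assms(1) by (auto dest: list_emb_set)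
  then have "length (filter (\<lambda>x. x \<in> set xs) zs) = length xs"
    using assms(2,3) by (simp add: distinct_length_filter distinct_card Int_absorb2 Collect_mem_eq)
  ultimately show ?thesis
    by (metis subseq_same_length)
qed

lemma Sh_eq_shuffles:
  assumes "distinct \<pi>" "distinct \<delta>" "set \<pi> \<inter> set \<delta> = {}"
  shows "Sh \<pi> \<delta> = shuffles \<pi> \<delta>"
proof
  show "shuffles \<pi> \<delta> \<subseteq> Sh \<pi> \<delta>"
  proof
    fix \<alpha> assume "\<alpha> \<in> shuffles \<pi> \<delta>"
    then have "subseq \<pi> \<alpha>" "subseq \<delta> \<alpha>"
      using filter_shuffles_disjoint1(1)[OF assms(3)] filter_shuffles_disjoint2(1)[OF assms(3)]
      by (metis subseq_filter_left)+
    with \<open>\<alpha> \<in> shuffles \<pi> \<delta>\<close> show "\<alpha> \<in> Sh \<pi> \<delta>"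
      using assms distinct_disjoint_shuffles length_shuffles unfolding Sh_def by blast
  qed
next
  show "Sh \<pi> \<delta> \<subseteq> shuffles \<pi> \<delta>"
  proof
    fix \<alpha> assume "\<alpha> \<in> Sh \<pi> \<delta>"
    then have \<alpha>: "distinct \<alpha>" "length \<alpha> = length \<pi> + length \<delta>" "subseq \<pi> \<alpha>" "subseq \<delta> \<alpha>"
      unfolding Sh_def by auto
    have sets: "set \<pi> \<subseteq> set \<alpha>" "set \<delta> \<subseteq> set \<alpha>"
      using \<alpha>(3,4) by (auto dest: list_emb_set)
    have "card (set \<pi> \<union> set \<delta>) = card (set \<alpha>)"
      using assms \<alpha>(1,2) by (simp add: card_Un_disjoint distinct_card)
    then have "set \<alpha> = set \<pi> \<union> set \<delta>"
      using sets by (metis card_subset_eq finite_set le_sup_iff)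
    then have "filter (\<lambda>x. x \<notin> set \<pi>) \<alpha> = filter (\<lambda>x. x \<in> set \<delta>) \<alpha>"
      using assms(3) by (intro filter_cong) auto
    then show "\<alpha> \<in> shuffles \<pi> \<delta>"
      using partition_in_shuffles[of \<alpha> "\<lambda>x. x \<in> set \<pi>"]
        filter_mem_eq_if_subseq[of \<pi> \<alpha>] filter_mem_eq_if_subseq[of \<delta> \<alpha>] \<alpha> assms
      by simp
  qed
qed

lemma des_Cons_Cons: "des (x # y # ys) = des (y # ys) + of_bool (y < x)"
proof -
  let ?D = "\<lambda>xs. {i. Suc i < length xs \<and> xs ! Suc i < xs ! i}"
  have "?D (x # y # ys) = (if y < x then {0} else {}) \<union> Suc ` ?D (y # ys)"
  proof (rule set_eqI)
    show "i \<in> ?D (x # y # ys) \<longleftrightarrow> i \<in> (if y < x then {0} else {}) \<union> Suc ` ?D (y # ys)" for i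
      by (cases i) auto
  qed
  moreover have "finite (?D (y # ys))"
    by (rule finite_subset[of _ "{..<length (y # ys)}"]) auto
  ultimately show ?thesis
    unfolding des_def by (simp add: card_image)
qed

lemma des_Cons: "xs \<noteq> [] \<Longrightarrow> des (x # xs) = des xs + of_bool (hd xs < x)"
  by (cases xs) (simp_all add: des_Cons_Cons)

lemma des_singleton [simp]: "des [x] = 0"
  by (simp add: des_def)

lemma des_le_length: "des xs \<le> length xs - 1"
proof -
  have "{i. Suc i < length xs \<and> xs ! Suc i < xs ! i} \<subseteq> {..<length xs - 1}"
    by auto
  then show ?thesis
    unfolding des_def by (metis card_lessThan card_mono finite_lessThan)
qed

text \<open>For lists without equal neighbours these are the ascents.\<close>

definition nondes :: "int list \<Rightarrow> nat" where
  "nondes xs = length xs - 1 - des xs"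

lemma nondes_singleton [simp]: "nondes [x] = 0"
  by (simp add: nondes_def)

lemma nondes_Cons: "xs \<noteq> [] \<Longrightarrow> nondes (x # xs) = nondes xs + of_bool (\<not> hd xs < x)"
  using des_le_length[of xs] by (cases xs) (auto simp: nondes_def des_Cons)

text \<open>Allowing negative lower indices makes Pascal's rule unconditional, so coefficient
  sequences can be shifted freely.\<close>

definition int_choose :: "nat \<Rightarrow> int \<Rightarrow> nat" where
  "int_choose n k = (if k < 0 then 0 else n choose nat k)"

lemma int_choose_Suc: "int_choose (Suc n) k = int_choose n k + int_choose n (k - 1)"
proof (cases "k \<le> 0")
  case True
  then show ?thesis by (auto simp: int_choose_def)
next
  case False
  then have "nat k = Suc (nat (k - 1))" by simp
  with False show ?thesis by (simp add: int_choose_def)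
qed

lemma int_choose_eq_0: "k < 0 \<or> int n < k \<Longrightarrow> int_choose n k = 0"
  by (auto simp: int_choose_def)

definition coeff_poly :: "'a::comm_ring_1 \<Rightarrow> (int \<Rightarrow> nat) \<Rightarrow> nat \<Rightarrow> 'a" where
  "coeff_poly t c N = (\<Sum>m<N. of_nat (c (int m)) * t ^ m)"

lemma coeff_poly_bound_cong:
  assumes "\<And>m. B \<le> m \<Longrightarrow> c (int m) = 0" "B \<le> N"
  shows "coeff_poly t c N = coeff_poly t c B"
  unfolding coeff_poly_def using assms by (intro sum.mono_neutral_right) auto

lemma coeff_poly_add: "coeff_poly t c N + coeff_poly t c' N = coeff_poly t (\<lambda>k. c k + c' k) N"
  by (simp add: coeff_poly_def sum.distrib distrib_right)

lemma coeff_poly_shift: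
  assumes "c (-1) = 0"
  shows "t * coeff_poly t c N = coeff_poly t (\<lambda>k. c (k - 1)) (Suc N)"
  using assms unfolding coeff_poly_def sum.lessThan_Suc_shift
  by (simp add: sum_distrib_left algebra_simps)

lemma coeff_poly_delta:
  assumes "\<And>k. c k = of_bool (k = int p)" "p < N"
  shows "coeff_poly t c N = t ^ p"
proof -
  have "of_nat (c (int m)) * t ^ m = (if m = p then t ^ p else 0)" for m
    using assms(1) by simp
  then show ?thesis
    using assms(2) by (simp add: coeff_poly_def sum.delta)
qed

lemma coeff_poly_cong: "(\<And>k. c k = c' k) \<Longrightarrow> coeff_poly t c N = coeff_poly t c' N"
  by (simp add: coeff_poly_def)

lemma coeff_poly_Pascal:
  assumes "\<And>k. c k = c' k + c'' (k - 1)" "c'' (-1) = 0"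
  shows "coeff_poly t c (Suc N) = coeff_poly t c' (Suc N) + t * coeff_poly t c'' N"
  using assms by (simp add: coeff_poly_shift coeff_poly_add cong: coeff_poly_cong)

text \<open>Closed forms for the descent polynomials of the shuffles led by the first letter of the
  second (resp. first) list: \<open>a, d\<close> count non-descents and descents of \<pi>, \<open>A, D\<close> those
  of \<delta>, and \<open>b\<close> says that the last letter is unconstrained (see \<open>des_sum_led_eq_gf\<close>).\<close>

definition led_by_snd_coeff :: "bool \<Rightarrow> nat \<Rightarrow> nat \<Rightarrow> nat \<Rightarrow> nat \<Rightarrow> int \<Rightarrow> nat" where
  "led_by_snd_coeff b a d A D k =
    int_choose (A + d + of_bool b) (k - int D) * int_choose (a + D) (k - int d - 1)"

definition led_by_fst_coeff :: "bool \<Rightarrow> nat \<Rightarrow> nat \<Rightarrow> nat \<Rightarrow> nat \<Rightarrow> int \<Rightarrow> nat" where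
  "led_by_fst_coeff b a d A D k =
    int_choose (A + d + of_bool b) (k - int D) * int_choose (a + D) (k - int d)"

definition gf_led_by_snd :: "'a::comm_ring_1 \<Rightarrow> bool \<Rightarrow> nat \<Rightarrow> nat \<Rightarrow> nat \<Rightarrow> nat \<Rightarrow> 'a" where
  "gf_led_by_snd t b a d A D = coeff_poly t (led_by_snd_coeff b a d A D) (a + d + D + 2)"

definition gf_led_by_fst :: "'a::comm_ring_1 \<Rightarrow> bool \<Rightarrow> nat \<Rightarrow> nat \<Rightarrow> nat \<Rightarrow> nat \<Rightarrow> 'a" where
  "gf_led_by_fst t b a d A D = coeff_poly t (led_by_fst_coeff b a d A D) (a + d + D + 2)"

lemma led_by_snd_coeff_minus_one [simp]: "led_by_snd_coeff b a d A D (-1) = 0"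
  and led_by_fst_coeff_minus_one [simp]: "led_by_fst_coeff b a d A D (-1) = 0"
  by (simp_all add: led_by_snd_coeff_def led_by_fst_coeff_def int_choose_def)

lemma gf_led_by_snd_bound:
  "a + d + D + 2 \<le> N \<Longrightarrow> gf_led_by_snd t b a d A D = coeff_poly t (led_by_snd_coeff b a d A D) N"
  unfolding gf_led_by_snd_def
  by (rule coeff_poly_bound_cong[symmetric]) (auto simp: led_by_snd_coeff_def int_choose_eq_0)

lemma gf_led_by_fst_bound:
  "a + d + D + 2 \<le> N \<Longrightarrow> gf_led_by_fst t b a d A D = coeff_poly t (led_by_fst_coeff b a d A D) N"
  unfolding gf_led_by_fst_def
  by (rule coeff_poly_bound_cong[symmetric]) (auto simp: led_by_fst_coeff_def int_choose_eq_0)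

lemma gf_led_by_snd_nondes_Suc:
  "gf_led_by_snd t b a d (Suc A) D = gf_led_by_snd t b a d A D + t * gf_led_by_fst t b a d A D"
proof -
  have "led_by_snd_coeff b a d (Suc A) D k = led_by_snd_coeff b a d A D k + led_by_fst_coeff b a d A D (k - 1)" for k
    by (simp add: led_by_snd_coeff_def led_by_fst_coeff_def int_choose_Suc algebra_simps)
  from coeff_poly_Pascal[OF this led_by_fst_coeff_minus_one] show ?thesis
    by (simp add: gf_led_by_snd_bound[of a d D "Suc (a + d + D + 2)"] gf_led_by_fst_def)
qed

lemma gf_led_by_snd_des_Suc:
  "gf_led_by_snd t b a d A (Suc D) = t * gf_led_by_snd t b a d A D + t * gf_led_by_fst t b a d A D"
proof -
  let ?c = "\<lambda>k. led_by_snd_coeff b a d A D k + led_by_fst_coeff b a d A D k"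
  have "led_by_snd_coeff b a d A (Suc D) k = ?c (k - 1)" for k
    by (simp add: led_by_snd_coeff_def led_by_fst_coeff_def int_choose_Suc algebra_simps)
  then have "gf_led_by_snd t b a d A (Suc D) = coeff_poly t (\<lambda>k. ?c (k - 1)) (a + d + Suc D + 2)"
    unfolding gf_led_by_snd_def by (rule coeff_poly_cong)
  also have "\<dots> = t * coeff_poly t ?c (a + d + D + 2)"
    by (simp add: coeff_poly_shift)
  finally show ?thesis
    by (simp add: gf_led_by_snd_def gf_led_by_fst_def distrib_left flip: coeff_poly_add)
qed

lemma gf_led_by_fst_nondes_Suc:
  "gf_led_by_fst t b (Suc a) d A D = gf_led_by_fst t b a d A D + gf_led_by_snd t b a d A D"
proof -
  have "led_by_fst_coeff b (Suc a) d A D k = led_by_fst_coeff b a d A D k + led_by_snd_coeff b a d A D k" for k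
    by (simp add: led_by_snd_coeff_def led_by_fst_coeff_def int_choose_Suc algebra_simps)
  then have "gf_led_by_fst t b (Suc a) d A D =
      coeff_poly t (\<lambda>k. led_by_fst_coeff b a d A D k + led_by_snd_coeff b a d A D k) (Suc a + d + D + 2)"
    unfolding gf_led_by_fst_def by (rule coeff_poly_cong)
  then show ?thesis
    by (simp add: gf_led_by_fst_bound[of a d D "Suc a + d + D + 2"]
        gf_led_by_snd_bound[of a d D "Suc a + d + D + 2"] coeff_poly_add)
qed

lemma gf_led_by_fst_des_Suc:
  "gf_led_by_fst t b a (Suc d) A D = t * gf_led_by_fst t b a d A D + gf_led_by_snd t b a d A D"
proof -
  have "led_by_fst_coeff b a (Suc d) A D k = led_by_snd_coeff b a d A D k + led_by_fst_coeff b a d A D (k - 1)" for k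
    by (simp add: led_by_snd_coeff_def led_by_fst_coeff_def int_choose_Suc algebra_simps)
  from coeff_poly_Pascal[OF this led_by_fst_coeff_minus_one] show ?thesis
    by (simp add: gf_led_by_snd_bound[of a d D "Suc (a + d + D + 2)"] gf_led_by_fst_def add.commute)
qed

lemma gf_led_by_snd_singleton: "gf_led_by_snd t b a d 0 0 = (if b then t ^ Suc d else 0)"
proof (cases b)
  case True
  have "led_by_snd_coeff b a d 0 0 k = of_bool (k = int (Suc d))" for k
    using True nat_int_add[of 1 d]
    by (auto simp: led_by_snd_coeff_def int_choose_def binomial_eq_0 nat_diff_distrib)
  with True show ?thesis
    unfolding gf_led_by_snd_def by (simp add: coeff_poly_delta[where p = "Suc d"])
next
  case False
  then have "led_by_snd_coeff b a d 0 0 k = 0" for k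
    by (auto simp: led_by_snd_coeff_def int_choose_def binomial_eq_0)
  with False show ?thesis
    by (simp add: gf_led_by_snd_def coeff_poly_def)
qed

lemma gf_led_by_fst_singleton: "gf_led_by_fst t b 0 0 A D = t ^ D"
proof -
  have "led_by_fst_coeff b 0 0 A D k = of_bool (k = int D)" for k
    by (auto simp: led_by_fst_coeff_def int_choose_def binomial_eq_0)
  then show ?thesis
    unfolding gf_led_by_fst_def by (simp add: coeff_poly_delta)
qed

lemma gf_led_by_snd_Cons:
  assumes "xs \<noteq> []"
  shows "gf_led_by_snd t b a d (nondes (x # xs)) (des (x # xs)) =
    (if hd xs < x then t else 1) * gf_led_by_snd t b a d (nondes xs) (des xs)
    + t * gf_led_by_fst t b a d (nondes xs) (des xs)"
  using assms
  by (cases "hd xs < x") (simp_all add: nondes_Cons des_Cons gf_led_by_snd_nondes_Suc gf_led_by_snd_des_Suc)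

lemma gf_led_by_fst_Cons:
  assumes "xs \<noteq> []"
  shows "gf_led_by_fst t b (nondes (x # xs)) (des (x # xs)) A D =
    (if hd xs < x then t else 1) * gf_led_by_fst t b (nondes xs) (des xs) A D
    + gf_led_by_snd t b (nondes xs) (des xs) A D"
  using assms
  by (cases "hd xs < x") (simp_all add: nondes_Cons des_Cons gf_led_by_fst_nondes_Suc gf_led_by_fst_des_Suc)

definition des_sum_led :: "'a::comm_ring_1 \<Rightarrow> bool \<Rightarrow> int \<Rightarrow> int list \<Rightarrow> int list \<Rightarrow> 'a" where
  "des_sum_led t b z \<pi> \<delta> = (\<Sum>\<alpha> | \<alpha> \<in> shuffles \<pi> \<delta> \<and> hd \<alpha> = z \<and> (b \<or> last \<alpha> = last \<delta>). t ^ des \<alpha>)"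

lemma shuffles_hd_Cons_right:
  assumes "z \<notin> set xs"
  shows "{\<alpha> \<in> shuffles xs (z # ys). hd \<alpha> = z} = (#) z ` shuffles xs ys"
proof (rule set_eqI)
  show "\<alpha> \<in> {\<alpha> \<in> shuffles xs (z # ys). hd \<alpha> = z} \<longleftrightarrow> \<alpha> \<in> (#) z ` shuffles xs ys" for \<alpha>
    using assms by (cases \<alpha>) (auto simp: Cons_in_shuffles_iff)
qed

lemma des_sum_led_eq_sum_Cons:
  assumes "{\<alpha> \<in> shuffles \<pi> \<delta>. hd \<alpha> = z} = (#) z ` shuffles \<pi>' \<delta>'" "\<delta>' \<noteq> []" "last \<delta>' = last \<delta>"
  shows "des_sum_led t b z \<pi> \<delta> =
    (\<Sum>\<beta> | \<beta> \<in> shuffles \<pi>' \<delta>' \<and> (b \<or> last \<beta> = last \<delta>'). t ^ des (z # \<beta>))"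
proof -
  have "{\<alpha>. \<alpha> \<in> shuffles \<pi> \<delta> \<and> hd \<alpha> = z \<and> (b \<or> last \<alpha> = last \<delta>)} =
      {\<alpha> \<in> {\<alpha> \<in> shuffles \<pi> \<delta>. hd \<alpha> = z}. b \<or> last \<alpha> = last \<delta>}"
    by auto
  also have "\<dots> = (#) z ` {\<beta> \<in> shuffles \<pi>' \<delta>'. b \<or> last (z # \<beta>) = last \<delta>}"
    unfolding assms(1) Compr_image_eq ..
  also have "{\<beta> \<in> shuffles \<pi>' \<delta>'. b \<or> last (z # \<beta>) = last \<delta>} =
      {\<beta>. \<beta> \<in> shuffles \<pi>' \<delta>' \<and> (b \<or> last \<beta> = last \<delta>')}"
    using assms(2,3) by (intro Collect_cong) auto
  finally show ?thesis
    unfolding des_sum_led_def by (simp add: sum.reindex)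
qed

lemma des_sum_led_Cons_right:
  assumes "z \<notin> set \<pi>" "\<delta> \<noteq> []"
  shows "des_sum_led t b z \<pi> (z # \<delta>) =
    (\<Sum>\<beta> | \<beta> \<in> shuffles \<pi> \<delta> \<and> (b \<or> last \<beta> = last \<delta>). t ^ des (z # \<beta>))"
  using assms by (intro des_sum_led_eq_sum_Cons shuffles_hd_Cons_right) simp_all

lemma des_sum_led_Cons_left:
  assumes "z \<notin> set \<delta>" "\<delta> \<noteq> []"
  shows "des_sum_led t b z (z # \<pi>) \<delta> =
    (\<Sum>\<beta> | \<beta> \<in> shuffles \<pi> \<delta> \<and> (b \<or> last \<beta> = last \<delta>). t ^ des (z # \<beta>))"
  using assms shuffles_hd_Cons_right[of z \<delta> \<pi>]
  by (intro des_sum_led_eq_sum_Cons) (simp_all add: shuffles_commutes)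

lemma des_sum_led_singleton_right:
  assumes "\<pi> \<noteq> []" "\<forall>x\<in>set \<pi>. x < z"
  shows "des_sum_led t b z \<pi> [z] = (if b then t ^ Suc (des \<pi>) else 0)"
proof -
  have "z \<notin> set \<pi>" "last (z # \<pi>) \<noteq> z"
    using assms by auto
  then have "{\<alpha> \<in> {\<alpha> \<in> shuffles \<pi> [z]. hd \<alpha> = z}. b \<or> last \<alpha> = z} = (if b then {z # \<pi>} else {})"
    unfolding shuffles_hd_Cons_right[OF \<open>z \<notin> set \<pi>\<close>] by auto
  then have "{\<alpha>. \<alpha> \<in> shuffles \<pi> [z] \<and> hd \<alpha> = z \<and> (b \<or> last \<alpha> = last [z])} = (if b then {z # \<pi>} else {})"
    by (simp add: conj_assoc)
  then show ?thesis
    using assms by (simp add: des_sum_led_def des_Cons)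
qed

lemma des_sum_led_singleton_left:
  assumes "\<delta> \<noteq> []" "\<forall>y\<in>set \<delta>. z < y"
  shows "des_sum_led t b z [z] \<delta> = t ^ des \<delta>"
proof -
  have "z < hd \<delta>"
    using assms by simp
  have "des_sum_led t b z [z] \<delta> = (\<Sum>\<beta> | \<beta> \<in> shuffles [] \<delta> \<and> (b \<or> last \<beta> = last \<delta>). t ^ des (z # \<beta>))"
    using assms by (intro des_sum_led_Cons_left) auto
  also have "{\<beta>. \<beta> \<in> shuffles [] \<delta> \<and> (b \<or> last \<beta> = last \<delta>)} = {\<delta>}"
    by auto
  also have "(\<Sum>\<beta>\<in>{\<delta>}. t ^ des (z # \<beta>)) = t ^ des \<delta>"
    using \<open>z < hd \<delta>\<close> assms(1) by (simp add: des_Cons)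
  finally show ?thesis .
qed

lemma sum_des_Cons_hd:
  fixes t :: "'a::comm_ring_1"
  assumes "\<forall>\<beta>\<in>S. \<beta> \<noteq> [] \<and> hd \<beta> = y"
  shows "(\<Sum>\<beta>\<in>S. t ^ des (z # \<beta>)) = (if y < z then t else 1) * (\<Sum>\<beta>\<in>S. t ^ des \<beta>)"
proof -
  have "t ^ des (z # \<beta>) = (if y < z then t else 1) * t ^ des \<beta>" if "\<beta> \<in> S" for \<beta>
    using assms that by (simp add: des_Cons)
  then show ?thesis
    by (simp add: sum_distrib_left)
qed

lemma sum_des_Cons_shuffles:
  assumes "\<pi> \<noteq> []" "\<delta> \<noteq> []" "hd \<pi> \<noteq> hd \<delta>"
  shows "(\<Sum>\<beta> | \<beta> \<in> shuffles \<pi> \<delta> \<and> (b \<or> last \<beta> = last \<delta>). t ^ des (z # \<beta>)) =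
    (if hd \<delta> < z then t else 1) * des_sum_led t b (hd \<delta>) \<pi> \<delta>
    + (if hd \<pi> < z then t else 1) * des_sum_led t b (hd \<pi>) \<pi> \<delta>"
proof -
  let ?S = "\<lambda>y. {\<beta>. \<beta> \<in> shuffles \<pi> \<delta> \<and> hd \<beta> = y \<and> (b \<or> last \<beta> = last \<delta>)}"
  have hd: "\<beta> \<noteq> [] \<and> (hd \<beta> = hd \<pi> \<or> hd \<beta> = hd \<delta>)" if "\<beta> \<in> shuffles \<pi> \<delta>" for \<beta>
    using that assms(1,2) by (cases \<beta>) (auto simp: Cons_in_shuffles_iff)
  then have "{\<beta>. \<beta> \<in> shuffles \<pi> \<delta> \<and> (b \<or> last \<beta> = last \<delta>)} = ?S (hd \<delta>) \<union> ?S (hd \<pi>)"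
    by auto
  then have "(\<Sum>\<beta> | \<beta> \<in> shuffles \<pi> \<delta> \<and> (b \<or> last \<beta> = last \<delta>). t ^ des (z # \<beta>)) =
      (\<Sum>\<beta>\<in>?S (hd \<delta>). t ^ des (z # \<beta>)) + (\<Sum>\<beta>\<in>?S (hd \<pi>). t ^ des (z # \<beta>))"
    using assms(3) by (simp add: sum.union_disjoint disjoint_iff)
  also have "\<dots> = (if hd \<delta> < z then t else 1) * des_sum_led t b (hd \<delta>) \<pi> \<delta>
      + (if hd \<pi> < z then t else 1) * des_sum_led t b (hd \<pi>) \<pi> \<delta>"
    unfolding des_sum_led_def using hd
    by (simp add: sum_des_Cons_hd[of "?S (hd \<delta>)" "hd \<delta>"] sum_des_Cons_hd[of "?S (hd \<pi>)" "hd \<pi>"])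
  finally show ?thesis .
qed

lemma des_sum_led_Cons_right_rec:
  assumes "\<forall>x\<in>set \<pi>. \<forall>y\<in>set (z # \<delta>). x < y" "\<pi> \<noteq> []" "\<delta> \<noteq> []"
  shows "des_sum_led t b z \<pi> (z # \<delta>) =
    (if hd \<delta> < z then t else 1) * des_sum_led t b (hd \<delta>) \<pi> \<delta> + t * des_sum_led t b (hd \<pi>) \<pi> \<delta>"
proof -
  have "z \<notin> set \<pi>" "hd \<pi> \<noteq> hd \<delta>" "hd \<pi> < z"
    using assms hd_in_set[OF assms(2)] hd_in_set[OF assms(3)] by fastforce+
  have "des_sum_led t b z \<pi> (z # \<delta>) =
      (\<Sum>\<beta> | \<beta> \<in> shuffles \<pi> \<delta> \<and> (b \<or> last \<beta> = last \<delta>). t ^ des (z # \<beta>))"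
    by (rule des_sum_led_Cons_right) fact+
  also have "\<dots> = (if hd \<delta> < z then t else 1) * des_sum_led t b (hd \<delta>) \<pi> \<delta>
      + (if hd \<pi> < z then t else 1) * des_sum_led t b (hd \<pi>) \<pi> \<delta>"
    by (rule sum_des_Cons_shuffles) fact+
  finally show ?thesis
    using \<open>hd \<pi> < z\<close> by simp
qed

lemma des_sum_led_Cons_left_rec:
  assumes "\<forall>x\<in>set (p # \<pi>). \<forall>y\<in>set \<delta>. x < y" "\<pi> \<noteq> []" "\<delta> \<noteq> []"
  shows "des_sum_led t b p (p # \<pi>) \<delta> =
    (if hd \<pi> < p then t else 1) * des_sum_led t b (hd \<pi>) \<pi> \<delta> + des_sum_led t b (hd \<delta>) \<pi> \<delta>"
proof -
  have "p \<notin> set \<delta>" "hd \<pi> \<noteq> hd \<delta>" "p < hd \<delta>"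
    using assms hd_in_set[OF assms(2)] hd_in_set[OF assms(3)] by fastforce+
  have "des_sum_led t b p (p # \<pi>) \<delta> =
      (\<Sum>\<beta> | \<beta> \<in> shuffles \<pi> \<delta> \<and> (b \<or> last \<beta> = last \<delta>). t ^ des (p # \<beta>))"
    by (rule des_sum_led_Cons_left) fact+
  also have "\<dots> = (if hd \<delta> < p then t else 1) * des_sum_led t b (hd \<delta>) \<pi> \<delta>
      + (if hd \<pi> < p then t else 1) * des_sum_led t b (hd \<pi>) \<pi> \<delta>"
    by (rule sum_des_Cons_shuffles) fact+
  finally show ?thesis
    using \<open>p < hd \<delta>\<close> by (simp add: add.commute)
qed

lemma des_sum_led_eq_gf:
  assumes "\<forall>x\<in>set \<pi>. \<forall>y\<in>set \<delta>. x < y" "\<pi> \<noteq> []" "\<delta> \<noteq> []"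
  shows "des_sum_led t b (hd \<delta>) \<pi> \<delta> = gf_led_by_snd t b (nondes \<pi>) (des \<pi>) (nondes \<delta>) (des \<delta>) \<and>
    des_sum_led t b (hd \<pi>) \<pi> \<delta> = gf_led_by_fst t b (nondes \<pi>) (des \<pi>) (nondes \<delta>) (des \<delta>)"
  using assms
proof (induction "length \<pi> + length \<delta>" arbitrary: \<pi> \<delta> rule: less_induct)
  case less
  then obtain p \<pi>' z \<delta>' where \<pi>: "\<pi> = p # \<pi>'" and \<delta>: "\<delta> = z # \<delta>'"
    by (meson list.exhaust)
  have "des_sum_led t b z \<pi> \<delta> = gf_led_by_snd t b (nondes \<pi>) (des \<pi>) (nondes \<delta>) (des \<delta>)"
  proof (cases "\<delta>' = []")
    case True
    then show ?thesis
      using less.prems \<delta> by (simp add: des_sum_led_singleton_right gf_led_by_snd_singleton)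
  next
    case False
    then show ?thesis
      using less.hyps[of \<pi> \<delta>'] less.prems \<delta>
      by (simp add: des_sum_led_Cons_right_rec gf_led_by_snd_Cons)
  qed
  moreover have "des_sum_led t b p \<pi> \<delta> = gf_led_by_fst t b (nondes \<pi>) (des \<pi>) (nondes \<delta>) (des \<delta>)"
  proof (cases "\<pi>' = []")
    case True
    then show ?thesis
      using less.prems \<pi> by (simp add: des_sum_led_singleton_left gf_led_by_fst_singleton)
  next
    case False
    then show ?thesis
      using less.hyps[of \<pi>' \<delta>] less.prems \<pi>
      by (simp add: des_sum_led_Cons_left_rec gf_led_by_fst_Cons)
  qed
  ultimately show ?case
    using \<pi> \<delta> by simp
qed

lemma gf_led_by_snd_eq_binomial_sum:
  fixes t :: "'a::comm_ring_1"
  assumes "j' < j" "k' \<le> k" "K = A + j' + of_bool b"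
  shows "gf_led_by_snd t b (j - 1 - j') j' A k' =
    (\<Sum>i=1..j+k+1. if k' \<le> i + j' then
       of_nat (K choose (i + j' - k')) * of_nat ((j - j' + k' - 1) choose (i - 1)) * t ^ (i + j')
     else 0)"
proof -
  define f where "f m = of_nat (led_by_snd_coeff b (j - 1 - j') j' A k' (int m)) * t ^ m" for m
  have "gf_led_by_snd t b (j - 1 - j') j' A k' = sum f {..<j' + j + k + 2}"
    unfolding f_def coeff_poly_def[symmetric] by (rule gf_led_by_snd_bound) (use assms in simp)
  also have "\<dots> = sum f {1 + j'..j + k + 1 + j'}"
    by (rule sum.mono_neutral_right) (auto simp: f_def led_by_snd_coeff_def int_choose_def)
  also have "\<dots> = sum (\<lambda>i. f (i + j')) {1..j + k + 1}"
    by (rule sum.shift_bounds_cl_nat_ivl)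
  also have "\<dots> = (\<Sum>i=1..j+k+1. if k' \<le> i + j' then
       of_nat (K choose (i + j' - k')) * of_nat ((j - j' + k' - 1) choose (i - 1)) * t ^ (i + j')
     else 0)"
  proof (rule sum.cong)
    fix i assume i: "i \<in> {1..j + k + 1}"
    have "int_choose (j - 1 - j' + k') (int (i + j') - int j' - 1) = (j - j' + k' - 1) choose (i - 1)"
      using i assms unfolding int_choose_def by (auto simp: nat_diff_distrib)
    moreover have "int_choose K (int (i + j') - int k') = (if k' \<le> i + j' then K choose (i + j' - k') else 0)"
      by (simp add: int_choose_def nat_diff_distrib nat_int_add)
    ultimately show "f (i + j') = (if k' \<le> i + j' then
       of_nat (K choose (i + j' - k')) * of_nat ((j - j' + k' - 1) choose (i - 1)) * t ^ (i + j')
     else 0)"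
      using assms(3) by (simp add: f_def led_by_snd_coeff_def add.commute add.left_commute)
  qed simp
  finally show ?thesis .
qed

lemma sum_Sh_l_Sh_ls_eq_des_sum_led:
  assumes "distinct \<pi>" "distinct \<delta>" "set \<pi> \<inter> set \<delta> = {}" "\<delta> \<noteq> []"
  shows "(\<Sum>\<alpha>\<in>Sh_l \<pi> \<delta>. t ^ des \<alpha>) = des_sum_led t True (hd \<delta>) \<pi> \<delta>"
    and "(\<Sum>\<alpha>\<in>Sh_ls \<pi> \<delta>. t ^ des \<alpha>) = des_sum_led t False (hd \<delta>) \<pi> \<delta>"
proof -
  have "\<alpha> ! 0 = hd \<alpha>" if "\<alpha> \<in> shuffles \<pi> \<delta>" for \<alpha>
    using that assms(4) by (cases \<alpha>) auto
  then have "Sh_l \<pi> \<delta> = {\<alpha>. \<alpha> \<in> shuffles \<pi> \<delta> \<and> hd \<alpha> = hd \<delta> \<and> (True \<or> last \<alpha> = last \<delta>)}"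
    and "Sh_ls \<pi> \<delta> = {\<alpha>. \<alpha> \<in> shuffles \<pi> \<delta> \<and> hd \<alpha> = hd \<delta> \<and> (False \<or> last \<alpha> = last \<delta>)}"
    using assms(4) unfolding Sh_l_def Sh_ls_def Sh_eq_shuffles[OF assms(1-3)]
    by (auto simp: hd_conv_nth)
  then show "(\<Sum>\<alpha>\<in>Sh_l \<pi> \<delta>. t ^ des \<alpha>) = des_sum_led t True (hd \<delta>) \<pi> \<delta>"
    and "(\<Sum>\<alpha>\<in>Sh_ls \<pi> \<delta>. t ^ des \<alpha>) = des_sum_led t False (hd \<delta>) \<pi> \<delta>"
    unfolding des_sum_led_def by simp_all
qed

lemma sum_Sh_ll_eq_des_sum_led:
  fixes t :: "'a::comm_ring_1"
  assumes "distinct \<pi>" "distinct (z # z' # \<delta>)" "set \<pi> \<inter> set (z # z' # \<delta>) = {}" "z < z'"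
  shows "(\<Sum>\<alpha>\<in>Sh_ll \<pi> (z # z' # \<delta>). t ^ des \<alpha>) = des_sum_led t True z' \<pi> (z' # \<delta>)"
proof -
  let ?S = "{\<beta> \<in> shuffles \<pi> (z' # \<delta>). hd \<beta> = z'}"
  have "z \<notin> set \<pi>"
    using assms(3) by auto
  have "Sh_ll \<pi> (z # z' # \<delta>) = {\<alpha> \<in> shuffles \<pi> (z # z' # \<delta>). \<alpha> ! 0 = z \<and> \<alpha> ! 1 = z'}"
    by (simp add: Sh_ll_def Sh_eq_shuffles[OF assms(1-3)])
  also have "\<dots> = {\<alpha>. \<alpha> \<in> shuffles \<pi> (z # z' # \<delta>) \<and> hd \<alpha> = z \<and> \<alpha> ! 1 = z'}"
  proof (intro Collect_cong conj_cong refl)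
    show "\<alpha> ! 0 = z \<longleftrightarrow> hd \<alpha> = z" if "\<alpha> \<in> shuffles \<pi> (z # z' # \<delta>)" for \<alpha>
      using that by (cases \<alpha>) auto
  qed
  also have "\<dots> = {\<alpha> \<in> {\<alpha> \<in> shuffles \<pi> (z # z' # \<delta>). hd \<alpha> = z}. \<alpha> ! 1 = z'}"
    by auto
  also have "\<dots> = (#) z ` {\<beta> \<in> shuffles \<pi> (z' # \<delta>). (z # \<beta>) ! 1 = z'}"
    unfolding shuffles_hd_Cons_right[OF \<open>z \<notin> set \<pi>\<close>] Compr_image_eq ..
  also have "\<dots> = (#) z ` ?S"
  proof (intro arg_cong[where f = "image ((#) z)"] Collect_cong conj_cong refl)
    show "(z # \<beta>) ! 1 = z' \<longleftrightarrow> hd \<beta> = z'" if "\<beta> \<in> shuffles \<pi> (z' # \<delta>)" for \<beta>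
      using that by (cases \<beta>) auto
  qed
  finally have "(\<Sum>\<alpha>\<in>Sh_ll \<pi> (z # z' # \<delta>). t ^ des \<alpha>) = (\<Sum>\<beta>\<in>?S. t ^ des (z # \<beta>))"
    by (simp add: sum.reindex)
  also have "\<dots> = (\<Sum>\<beta>\<in>?S. t ^ des \<beta>)"
    using assms(4) by (subst sum_des_Cons_hd[where y = z']) auto
  finally show ?thesis
    unfolding des_sum_led_def by simp
qed

lemma des_sum_led_eq_binomial_sum:
  fixes t :: "'a::comm_ring_1"
  assumes "\<forall>x\<in>set \<pi>. \<forall>y\<in>set \<delta>. x < y" "\<pi> \<noteq> []" "\<delta> \<noteq> []"
    and "length \<pi> = j" "des \<pi> = j'" "des \<delta> = k'" "k' \<le> k" "K = nondes \<delta> + j' + of_bool b"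
  shows "des_sum_led t b (hd \<delta>) \<pi> \<delta> =
    (\<Sum>i=1..j+k+1. if k' \<le> i + j' then
       of_nat (K choose (i + j' - k')) * of_nat ((j - j' + k' - 1) choose (i - 1)) * t ^ (i + j')
     else 0)"
proof -
  have "0 < length \<pi>"
    using assms(2) by simp
  then have "nondes \<pi> = j - 1 - j'" "j' < j"
    using des_le_length[of \<pi>] assms(4,5) by (auto simp: nondes_def)
  then have "des_sum_led t b (hd \<delta>) \<pi> \<delta> = gf_led_by_snd t b (j - 1 - j') j' (nondes \<delta>) k'"
    using des_sum_led_eq_gf[OF assms(1-3), THEN conjunct1] assms(5,6) by simp
  also have "\<dots> = (\<Sum>i=1..j+k+1. if k' \<le> i + j' then
       of_nat (K choose (i + j' - k')) * of_nat ((j - j' + k' - 1) choose (i - 1)) * t ^ (i + j')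
     else 0)"
    by (rule gf_led_by_snd_eq_binomial_sum) fact+
  finally show ?thesis .
qed

theorem theorem3p4:
  fixes \<pi> \<delta> :: "int list" and j k j' k' :: nat and t :: "'a::comm_ring_1"
  assumes "distinct \<pi>" and "distinct \<delta>" and "set \<pi> \<inter> set \<delta> = {}"
    and "length \<pi> = j" and "length \<delta> = k + 1"
    and "j \<ge> 1" and "k \<ge> 1"
    and "des \<pi> = j'" and "des \<delta> = k'"
    and "\<delta> ! 0 < \<delta> ! 1"
    and "\<forall>x\<in>set \<pi>. \<forall>y\<in>set \<delta>. x < y"
  shows "((\<Sum>\<alpha>\<in>Sh_l \<pi> \<delta>. t ^ des \<alpha>) =
           (\<Sum>i=1..j+k+1. if k' \<le> i + j' then
              of_nat ((k + 1 - k' + j') choose (i + j' - k')) * of_nat ((j - j' + k' - 1) choose (i - 1)) * t ^ (i + j')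
            else 0)) \<and>
         ((\<Sum>\<alpha>\<in>Sh_ls \<pi> \<delta>. t ^ des \<alpha>) =
           (\<Sum>i=1..j+k+1. if k' \<le> i + j' then
              of_nat ((k - k' + j') choose (i + j' - k')) * of_nat ((j - j' + k' - 1) choose (i - 1)) * t ^ (i + j')
            else 0)) \<and>
         ((\<Sum>\<alpha>\<in>Sh_ll \<pi> \<delta>. t ^ des \<alpha>) =
           (\<Sum>i=1..j+k+1. if k' \<le> i + j' then
              of_nat ((k - k' + j') choose (i + j' - k')) * of_nat ((j - j' + k' - 1) choose (i - 1)) * t ^ (i + j')
            else 0))"
proof -
  obtain z z' \<delta>' where \<delta>: "\<delta> = z # z' # \<delta>'"
    using assms(5,7) by (cases \<delta>; cases "tl \<delta>") auto
  have "\<pi> \<noteq> []" "z < z'"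
    using assms(4,6,10) \<delta> by auto
  have "des (z' # \<delta>') = k'"
    using assms(9) \<delta> \<open>z < z'\<close> by (simp add: des_Cons_Cons)
  moreover have "k' \<le> k - 1"
    using des_le_length[of "z' # \<delta>'"] \<open>des (z' # \<delta>') = k'\<close> assms(5) \<delta> by simp
  moreover have "nondes \<delta> = k - k'" "nondes (z' # \<delta>') = k - 1 - k'"
    using assms(5,9) \<delta> \<open>des (z' # \<delta>') = k'\<close> by (simp_all add: nondes_def)
  moreover have "\<delta> \<noteq> []" "\<forall>x\<in>set \<pi>. \<forall>y\<in>set (z' # \<delta>'). x < y"
    using assms(11) \<delta> by auto
  moreover have "(\<Sum>\<alpha>\<in>Sh_ll \<pi> \<delta>. t ^ des \<alpha>) = des_sum_led t True (hd (z' # \<delta>')) \<pi> (z' # \<delta>')"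
    using sum_Sh_ll_eq_des_sum_led[of \<pi> z z' \<delta>'] assms(1-3) \<delta> \<open>z < z'\<close> by simp
  ultimately show ?thesis
    using sum_Sh_l_Sh_ls_eq_des_sum_led[OF assms(1-3) \<open>\<delta> \<noteq> []\<close>, of t] \<open>\<pi> \<noteq> []\<close> assms(4,5,7,8,9,11)
    by (simp only:) (intro conjI des_sum_led_eq_binomial_sum; simp; linarith)
qed

end
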